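(* For each $j=0,\dots,4$, every isometry of the $\mathbb{Z}$-lattice $\Lambda_j$ is induced by an ($\mathcal{E}$-linear) isometry of $\Lambda$.
   Context: Let $\omega=e^{2\pi i/3}$, $\mathcal{E}=\mathbb{Z}[\omega]$, $\theta=\sqrt{-3}$. Let $\Lambda=\mathcal{E}^5$ with Hermitian form $h(x,y)=-x_0\bar y_0+x_1\bar y_1+\dots+x_4\bar y_4$. For $j=0,\dots,4$ let $\xi_j$ be the antilinear map $(x_0,\dots,x_4)\mapsto(\bar x_0,\dots,\bar x_{4-j},-\bar x_{5-j},\dots,-\bar x_4)$, and let $\Lambda_j=\Lambda^{\xi_j}$ be the $\mathbb{Z}$-lattice of $\xi_j$-fixed vectors, i.e. $\Lambda_j=\mathbb{Z}^{5-j}\oplus\theta\mathbb{Z}^j\subset\mathcal{E}^5$, equipped with the restriction of $h$ (which is real- and integer-valued on it). *)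

theory Defs
  imports Complex_Main
begin

text \<open>Vectors of C^5 are modelled as functions nat => complex supported on {0..<5}.\<close>

definition omega :: complex where
  "omega = Complex (-1/2) (sqrt 3 / 2)"

definition Eis :: "complex set" where
  "Eis = {of_int a + of_int b * omega | a b. True}"

definition Lam :: "(nat \<Rightarrow> complex) set" where
  "Lam = {x. (\<forall>i<5. x i \<in> Eis) \<and> (\<forall>i\<ge>5. x i = 0)}"

definition herm :: "(nat \<Rightarrow> complex) \<Rightarrow> (nat \<Rightarrow> complex) \<Rightarrow> complex" where
  "herm x y = - x 0 * cnj (y 0) + (\<Sum>i\<in>{1..4}. x i * cnj (y i))"

definition xi :: "nat \<Rightarrow> (nat \<Rightarrow> complex) \<Rightarrow> (nat \<Rightarrow> complex)" where
  "xi j x = (\<lambda>i. if i < 5 - j then cnj (x i) else if i < 5 then - cnj (x i) else 0)"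

definition Lam_j :: "nat \<Rightarrow> (nat \<Rightarrow> complex) set" where
  "Lam_j j = {x \<in> Lam. xi j x = x}"

text \<open>Isometry of the Z-lattice Lambda_j (with the restriction of h): an additive (hence
  Z-linear) bijection of Lambda_j onto itself preserving h.\<close>
definition lattice_isometry_j :: "nat \<Rightarrow> ((nat \<Rightarrow> complex) \<Rightarrow> (nat \<Rightarrow> complex)) \<Rightarrow> bool" where
  "lattice_isometry_j j g \<longleftrightarrow>
     bij_betw g (Lam_j j) (Lam_j j) \<and>
     (\<forall>x\<in>Lam_j j. \<forall>y\<in>Lam_j j. g (\<lambda>i. x i + y i) = (\<lambda>i. g x i + g y i)) \<and>
     (\<forall>x\<in>Lam_j j. \<forall>y\<in>Lam_j j. herm (g x) (g y) = herm x y)"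

definition E_isometry :: "((nat \<Rightarrow> complex) \<Rightarrow> (nat \<Rightarrow> complex)) \<Rightarrow> bool" where
  "E_isometry G \<longleftrightarrow>
     bij_betw G Lam Lam \<and>
     (\<forall>x\<in>Lam. \<forall>y\<in>Lam. G (\<lambda>i. x i + y i) = (\<lambda>i. G x i + G y i)) \<and>
     (\<forall>a\<in>Eis. \<forall>x\<in>Lam. G (\<lambda>i. a * x i) = (\<lambda>i. a * G x i)) \<and>
     (\<forall>x\<in>Lam. \<forall>y\<in>Lam. herm (G x) (G y) = herm x y)"

end

theory Submission imports Defs begin

text \<open>Lambda_j has the \<int>-basis b_i = beta_i e_i with beta_i = 1 for i < 5 - j and
  beta_i = \<theta> otherwise, so a \<int>-linear isometry g of Lambda_j has a unique \<E>-linear extension G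
  with G e_i = g(b_i) / beta_i, and G preserves h because h is sesquilinear. The only issue is
  integrality of G: for beta_i = \<theta> and beta_k = 1 the integer m = g(b_i)_k must be divisible
  by \<theta>, i.e. by 3. Writing b_k = g(w) gives \<plusminus>m = h(g b_i, b_k) = h(b_i, w), which lies in
  \<theta> cnj(\<theta> \<int>) = 3\<int>. The same construction for the inverse of g yields an inverse of G.\<close>

lemma omega_squared: "omega * omega = -1 - omega"
  by (simp add: omega_def complex_eq_iff field_simps)

lemma Eis_add: assumes "x \<in> Eis" "y \<in> Eis" shows "x + y \<in> Eis"
proof -
  obtain a b where x: "x = of_int a + of_int b * omega" using assms(1) by (auto simp: Eis_def)
  obtain c d where y: "y = of_int c + of_int d * omega" using assms(2) by (auto simp: Eis_def)
  have "x + y = of_int (a + c) + of_int (b + d) * omega" unfolding x y by (simp add: algebra_simps)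
  then show ?thesis unfolding Eis_def by blast
qed

lemma Eis_mult: assumes "x \<in> Eis" "y \<in> Eis" shows "x * y \<in> Eis"
proof -
  obtain a b where x: "x = of_int a + of_int b * omega" using assms(1) by (auto simp: Eis_def)
  obtain c d where y: "y = of_int c + of_int d * omega" using assms(2) by (auto simp: Eis_def)
  have "x * y = of_int (a*c) + of_int (a*d + b*c) * omega + of_int (b*d) * (omega * omega)"
    unfolding x y by (simp add: algebra_simps)
  also have "\<dots> = of_int (a*c - b*d) + of_int (a*d + b*c - b*d) * omega"
    by (simp add: omega_squared algebra_simps)
  finally show ?thesis unfolding Eis_def by blast
qed

lemma of_int_in_Eis: "of_int n \<in> Eis"
  unfolding Eis_def by (rule CollectI, rule exI[of _ n], rule exI[of _ 0]) simp

lemma Eis_sum: "finite I \<Longrightarrow> (\<And>i. i \<in> I \<Longrightarrow> f i \<in> Eis) \<Longrightarrow> sum f I \<in> Eis"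
  by (induction I rule: finite_induct) (auto intro: Eis_add of_int_in_Eis[of 0, simplified])

definition theta :: complex where "theta = Complex 0 (sqrt 3)"

lemma theta_eq: "theta = 1 + 2 * omega"
  by (simp add: theta_def omega_def complex_eq_iff)

lemma theta_in_Eis: "theta \<in> Eis"
  unfolding Eis_def theta_eq by (rule CollectI, rule exI[of _ 1], rule exI[of _ 2]) simp

lemma theta_squared: "theta * theta = -3"
  by (simp add: theta_def complex_eq_iff)

lemma cnj_theta: "cnj theta = - theta"
  by (simp add: theta_def complex_eq_iff)

lemma theta_nonzero: "theta \<noteq> 0"
  by (simp add: theta_def complex_eq_iff)

lemma Eis_real: assumes "z \<in> Eis" "cnj z = z" obtains n where "z = of_int n"
proof -
  obtain a b where z: "z = of_int a + of_int b * omega" using assms(1) by (auto simp: Eis_def)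
  have "Im z = 0" using arg_cong[OF assms(2), of Im] by simp
  then have "b = 0" by (simp add: z omega_def)
  then show ?thesis using that z by simp
qed

lemma Eis_imaginary: assumes "z \<in> Eis" "cnj z = - z" obtains n where "z = of_int n * theta"
proof -
  obtain a b where z: "z = of_int a + of_int b * omega" using assms(1) by (auto simp: Eis_def)
  have "Re z = 0" using arg_cong[OF assms(2), of Re] by simp
  then have "b = 2 * a" by (simp add: z omega_def)
  then show ?thesis using that z by (simp add: theta_eq algebra_simps)
qed

definition lattice_scale :: "nat \<Rightarrow> nat \<Rightarrow> complex" where
  "lattice_scale j i = (if i < 5 - j then 1 else theta)"

lemma lattice_scale_nonzero: "lattice_scale j i \<noteq> 0"
  by (simp add: lattice_scale_def theta_nonzero)

lemma Lam_j_iff: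
  "x \<in> Lam_j j \<longleftrightarrow> (\<forall>k\<ge>5. x k = 0) \<and> (\<forall>k<5. \<exists>n::int. x k = of_int n * lattice_scale j k)"
proof
  assume "x \<in> Lam_j j"
  then have x: "x \<in> Lam" and fixed: "\<And>k. xi j x k = x k" by (auto simp: Lam_j_def)
  have "\<exists>n::int. x k = of_int n * lattice_scale j k" if k: "k < 5" for k
  proof (cases "k < 5 - j")
    case True
    then have "cnj (x k) = x k" using fixed[of k] by (simp add: xi_def)
    moreover have "x k \<in> Eis" using x k by (simp add: Lam_def)
    ultimately obtain n where "x k = of_int n" using Eis_real by blast
    then show ?thesis using True by (auto simp: lattice_scale_def)
  next
    case False
    then have "- cnj (x k) = x k" using fixed[of k] k by (simp add: xi_def)
    then have "cnj (x k) = - x k" by (metis minus_minus)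
    moreover have "x k \<in> Eis" using x k by (simp add: Lam_def)
    ultimately obtain n where "x k = of_int n * theta" using Eis_imaginary by blast
    then show ?thesis using False by (auto simp: lattice_scale_def)
  qed
  then show "(\<forall>k\<ge>5. x k = 0) \<and> (\<forall>k<5. \<exists>n::int. x k = of_int n * lattice_scale j k)"
    using x by (auto simp: Lam_def)
next
  assume coords: "(\<forall>k\<ge>5. x k = 0) \<and> (\<forall>k<5. \<exists>n::int. x k = of_int n * lattice_scale j k)"
  have "x \<in> Lam"
    using coords Eis_mult[OF of_int_in_Eis] theta_in_Eis of_int_in_Eis[of 1]
    by (auto simp: Lam_def lattice_scale_def)
  moreover have "xi j x = x"
    using coords by (fastforce simp: xi_def lattice_scale_def cnj_theta)
  ultimately show "x \<in> Lam_j j" by (simp add: Lam_j_def)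
qed

lemma Lam_j_add: "x \<in> Lam_j j \<Longrightarrow> y \<in> Lam_j j \<Longrightarrow> (\<lambda>k. x k + y k) \<in> Lam_j j"
proof -
  assume x: "x \<in> Lam_j j" and y: "y \<in> Lam_j j"
  have "\<exists>n::int. x k + y k = of_int n * lattice_scale j k" if "k < 5" for k
  proof -
    obtain a b where "x k = of_int a * lattice_scale j k" "y k = of_int b * lattice_scale j k"
      using x y \<open>k < 5\<close> by (meson Lam_j_iff)
    then have "x k + y k = of_int (a + b) * lattice_scale j k" by (simp add: distrib_right)
    then show ?thesis ..
  qed
  then show ?thesis using x y by (simp add: Lam_j_iff)
qed

lemma Lam_j_int_mult: "x \<in> Lam_j j \<Longrightarrow> (\<lambda>k. of_int c * x k) \<in> Lam_j j"
proof -
  assume x: "x \<in> Lam_j j"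
  have "\<exists>n::int. of_int c * x k = of_int n * lattice_scale j k" if "k < 5" for k
  proof -
    obtain a where "x k = of_int a * lattice_scale j k" using x \<open>k < 5\<close> by (meson Lam_j_iff)
    then have "of_int c * x k = of_int (c * a) * lattice_scale j k" by simp
    then show ?thesis ..
  qed
  then show ?thesis using x by (simp add: Lam_j_iff)
qed

lemma Lam_j_int_combination:
  "finite S \<Longrightarrow> (\<And>i. i \<in> S \<Longrightarrow> v i \<in> Lam_j j) \<Longrightarrow> (\<lambda>k. \<Sum>i\<in>S. of_int (n i) * v i k) \<in> Lam_j j"
proof (induction S rule: finite_induct)
  case empty
  show ?case using Lam_j_iff[of "\<lambda>k. 0"] by (auto intro: exI[of _ 0])
next
  case (insert a S)
  then show ?case using Lam_j_add[OF Lam_j_int_mult] by simp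
qed

definition lattice_basis :: "nat \<Rightarrow> nat \<Rightarrow> nat \<Rightarrow> complex" where
  "lattice_basis j i = (\<lambda>k. if k = i then lattice_scale j i else 0)"

lemma lattice_basis_in_Lam_j: "i < 5 \<Longrightarrow> lattice_basis j i \<in> Lam_j j"
  unfolding Lam_j_iff lattice_basis_def by (auto intro: exI[of _ 1] exI[of _ 0])

lemma sum_lattice_basis:
  "(\<Sum>i<5. a i * lattice_basis j i k) = (if k < 5 then a k * lattice_scale j k else 0)"
proof -
  have "(\<Sum>i<5. a i * lattice_basis j i k) = (\<Sum>i<5. if k = i then a i * lattice_scale j i else 0)"
    by (rule sum.cong) (auto simp: lattice_basis_def)
  then show ?thesis by simp
qed

lemma lattice_basis_expansion:
  assumes "\<And>k. 5 \<le> k \<Longrightarrow> x k = 0"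
  shows "(\<lambda>k. \<Sum>i<5. x i / lattice_scale j i * lattice_basis j i k) = x"
  using assms sum_lattice_basis[of "\<lambda>i. x i / lattice_scale j i" j] by (auto simp: lattice_scale_nonzero)

lemma herm_expand:
  "herm x y = - x 0 * cnj (y 0) + x 1 * cnj (y 1) + x 2 * cnj (y 2) + x 3 * cnj (y 3) + x 4 * cnj (y 4)"
proof -
  have "{1..4::nat} = {1, 2, 3, 4}" by auto
  then show ?thesis by (simp add: herm_def algebra_simps)
qed

lemma herm_sum_left: "herm (\<lambda>k. \<Sum>i\<in>I. a i * u i k) y = (\<Sum>i\<in>I. a i * herm (u i) y)"
  by (simp add: herm_expand sum_distrib_right sum_distrib_left distrib_left sum.distrib sum_negf
      right_diff_distrib sum_subtractf mult.assoc)

lemma herm_sum_right: "herm x (\<lambda>k. \<Sum>i\<in>I. a i * u i k) = (\<Sum>i\<in>I. cnj (a i) * herm x (u i))"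
  by (simp add: herm_expand sum_distrib_right sum_distrib_left distrib_left sum.distrib sum_negf
      right_diff_distrib sum_subtractf mult.assoc mult.left_commute)

lemma herm_cong: "(\<And>k. k < 5 \<Longrightarrow> x k = x' k) \<Longrightarrow> (\<And>k. k < 5 \<Longrightarrow> y k = y' k) \<Longrightarrow> herm x y = herm x' y'"
  unfolding herm_expand by simp

lemma less_five_cases: "(k::nat) < 5 \<Longrightarrow> k = 0 \<or> k = 1 \<or> k = 2 \<or> k = 3 \<or> k = 4"
  by auto

lemma herm_lattice_basis_right:
  "k < 5 \<Longrightarrow> herm v (lattice_basis j k) = (if k = 0 then -1 else 1) * v k * cnj (lattice_scale j k)"
  unfolding herm_expand lattice_basis_def by (drule less_five_cases) auto

lemma herm_lattice_basis_left:
  "i < 5 \<Longrightarrow> herm (lattice_basis j i) v = (if i = 0 then -1 else 1) * lattice_scale j i * cnj (v i)"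
  unfolding herm_expand lattice_basis_def by (drule less_five_cases) auto

lemma additive_on_Lam_j_int_mult:
  assumes add: "\<forall>x\<in>Lam_j j. \<forall>y\<in>Lam_j j. g (\<lambda>i. x i + y i) = (\<lambda>i. g x i + g y i)"
    and x: "x \<in> Lam_j j"
  shows "g (\<lambda>k. of_int c * x k) = (\<lambda>k. of_int c * g x k)"
proof (induction c rule: int_induct[where k = 0])
  case base
  have "(\<lambda>k. 0) \<in> Lam_j j" using Lam_j_int_mult[OF x, of 0] by simp
  then have "g (\<lambda>k. 0) = (\<lambda>k. g (\<lambda>k. 0) k + g (\<lambda>k. 0) k)"
    using add[rule_format, of "\<lambda>k. 0" "\<lambda>k. 0"] by simp
  then show ?case by (simp add: fun_eq_iff)
next
  case (step1 c)
  have "g (\<lambda>k. of_int (c + 1) * x k) = g (\<lambda>k. of_int c * x k + x k)"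
    by (simp add: algebra_simps)
  also have "\<dots> = (\<lambda>k. g (\<lambda>k. of_int c * x k) k + g x k)"
    by (rule add[rule_format, OF Lam_j_int_mult[OF x] x])
  finally show ?case using step1.IH by (simp add: algebra_simps)
next
  case (step2 c)
  have "g (\<lambda>k. of_int c * x k) = g (\<lambda>k. of_int (c - 1) * x k + x k)"
    by (simp add: algebra_simps)
  also have "\<dots> = (\<lambda>k. g (\<lambda>k. of_int (c - 1) * x k) k + g x k)"
    by (rule add[rule_format, OF Lam_j_int_mult[OF x] x])
  finally show ?case using step2.IH by (simp add: algebra_simps fun_eq_iff)
qed

lemma additive_on_Lam_j_int_combination:
  assumes add: "\<forall>x\<in>Lam_j j. \<forall>y\<in>Lam_j j. g (\<lambda>i. x i + y i) = (\<lambda>i. g x i + g y i)"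
  shows "finite S \<Longrightarrow> (\<And>i. i \<in> S \<Longrightarrow> v i \<in> Lam_j j) \<Longrightarrow>
    g (\<lambda>k. \<Sum>i\<in>S. of_int (n i) * v i k) = (\<lambda>k. \<Sum>i\<in>S. of_int (n i) * g (v i) k)"
proof (induction S rule: finite_induct)
  case empty
  then show ?case using additive_on_Lam_j_int_mult[OF add lattice_basis_in_Lam_j, of 0 0] by simp
next
  case (insert a S)
  have va: "v a \<in> Lam_j j" and vS: "\<And>i. i \<in> S \<Longrightarrow> v i \<in> Lam_j j"
    using insert.prems by auto
  have "g (\<lambda>k. \<Sum>i\<in>insert a S. of_int (n i) * v i k)
      = g (\<lambda>k. of_int (n a) * v a k + (\<Sum>i\<in>S. of_int (n i) * v i k))"
    using insert.hyps by simp
  also have "\<dots> = (\<lambda>k. g (\<lambda>k. of_int (n a) * v a k) k + g (\<lambda>k. \<Sum>i\<in>S. of_int (n i) * v i k) k)"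
    by (rule add[rule_format, OF Lam_j_int_mult[OF va] Lam_j_int_combination[OF insert.hyps(1) vS]])
  also have "\<dots> = (\<lambda>k. of_int (n a) * g (v a) k + (\<Sum>i\<in>S. of_int (n i) * g (v i) k))"
    using additive_on_Lam_j_int_mult[OF add va] insert.IH[OF vS] by simp
  finally show ?case using insert.hyps by simp
qed

definition E_extension ::
    "nat \<Rightarrow> ((nat \<Rightarrow> complex) \<Rightarrow> (nat \<Rightarrow> complex)) \<Rightarrow> (nat \<Rightarrow> complex) \<Rightarrow> (nat \<Rightarrow> complex)" where
  "E_extension j g x = (\<lambda>k. \<Sum>i<5. x i / lattice_scale j i * g (lattice_basis j i) k)"

lemma E_extension_add:
  "E_extension j g (\<lambda>i. x i + y i) = (\<lambda>k. E_extension j g x k + E_extension j g y k)"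
  by (simp add: E_extension_def add_divide_distrib distrib_right sum.distrib)

lemma E_extension_mult: "E_extension j g (\<lambda>i. a * x i) = (\<lambda>k. a * E_extension j g x k)"
  by (simp add: E_extension_def sum_distrib_left mult.assoc)

lemma E_extension_sum:
  "E_extension j g (\<lambda>k. \<Sum>i\<in>I. a i * v i k) = (\<lambda>k. \<Sum>i\<in>I. a i * E_extension j g (v i) k)"
proof
  fix k
  have "E_extension j g (\<lambda>k. \<Sum>i\<in>I. a i * v i k) k
      = (\<Sum>l<5. \<Sum>i\<in>I. a i * (v i l / lattice_scale j l * g (lattice_basis j l) k))"
    unfolding E_extension_def by (simp add: sum_divide_distrib sum_distrib_right mult.assoc)
  also have "\<dots> = (\<Sum>i\<in>I. \<Sum>l<5. a i * (v i l / lattice_scale j l * g (lattice_basis j l) k))"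
    by (rule sum.swap)
  finally show "E_extension j g (\<lambda>k. \<Sum>i\<in>I. a i * v i k) k = (\<Sum>i\<in>I. a i * E_extension j g (v i) k)"
    unfolding E_extension_def by (simp add: sum_distrib_left)
qed

lemma E_extension_extends:
  assumes add: "\<forall>x\<in>Lam_j j. \<forall>y\<in>Lam_j j. g (\<lambda>i. x i + y i) = (\<lambda>i. g x i + g y i)"
    and x: "x \<in> Lam_j j"
  shows "E_extension j g x = g x"
proof -
  obtain n where n: "\<And>i. i < 5 \<Longrightarrow> x i = of_int (n i) * lattice_scale j i"
    using x unfolding Lam_j_iff by metis
  have coeff: "x i / lattice_scale j i = of_int (n i)" if "i < 5" for i
    using n[OF that] lattice_scale_nonzero by simp
  have "x = (\<lambda>k. \<Sum>i<5. x i / lattice_scale j i * lattice_basis j i k)"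
    using lattice_basis_expansion x by (simp add: Lam_j_iff)
  also have "\<dots> = (\<lambda>k. \<Sum>i<5. of_int (n i) * lattice_basis j i k)"
    by (simp add: coeff)
  finally have "g x = g (\<lambda>k. \<Sum>i<5. of_int (n i) * lattice_basis j i k)"
    by simp
  also have "\<dots> = (\<lambda>k. \<Sum>i<5. of_int (n i) * g (lattice_basis j i) k)"
    by (rule additive_on_Lam_j_int_combination[OF add]) (simp_all add: lattice_basis_in_Lam_j)
  finally show ?thesis unfolding E_extension_def by (simp add: coeff)
qed

lemma herm_E_extension:
  assumes herm_g: "\<forall>x\<in>Lam_j j. \<forall>y\<in>Lam_j j. herm (g x) (g y) = herm x y"
  shows "herm (E_extension j g x) (E_extension j g y) = herm x y"
proof -
  define a where "a i = x i / lattice_scale j i" for i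
  define b where "b i = y i / lattice_scale j i" for i
  have "herm (E_extension j g x) (E_extension j g y)
      = (\<Sum>i<5. a i * (\<Sum>l<5. cnj (b l) * herm (g (lattice_basis j i)) (g (lattice_basis j l))))"
    unfolding E_extension_def a_def[symmetric] b_def[symmetric] herm_sum_left herm_sum_right ..
  also have "\<dots> = (\<Sum>i<5. a i * (\<Sum>l<5. cnj (b l) * herm (lattice_basis j i) (lattice_basis j l)))"
    using herm_g lattice_basis_in_Lam_j by simp
  also have "\<dots> = herm (\<lambda>k. \<Sum>i<5. a i * lattice_basis j i k) (\<lambda>k. \<Sum>l<5. b l * lattice_basis j l k)"
    unfolding herm_sum_left herm_sum_right ..
  also have "\<dots> = herm x y"
    by (rule herm_cong; simp add: sum_lattice_basis; simp add: a_def b_def lattice_scale_nonzero)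
  finally show ?thesis .
qed

context
  fixes j g
  assumes iso: "lattice_isometry_j j g"
begin

lemma isometry_in_Lam_j: "x \<in> Lam_j j \<Longrightarrow> g x \<in> Lam_j j"
  using iso by (auto simp: lattice_isometry_j_def bij_betw_def)

lemma isometry_herm: "x \<in> Lam_j j \<Longrightarrow> y \<in> Lam_j j \<Longrightarrow> herm (g x) (g y) = herm x y"
  using iso by (simp add: lattice_isometry_j_def)

lemma isometry_theta_column_dvd:
  assumes i: "i < 5" "\<not> i < 5 - j" and k: "k < 5" "k < 5 - j"
    and m: "g (lattice_basis j i) k = of_int m"
  shows "3 dvd m"
proof -
  obtain w where w: "w \<in> Lam_j j" "g w = lattice_basis j k"
    using iso lattice_basis_in_Lam_j[OF k(1)]
    unfolding lattice_isometry_j_def bij_betw_def by (metis imageE)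
  obtain n where n: "w i = of_int n * theta"
    using w(1) i unfolding Lam_j_iff lattice_scale_def by (metis (full_types))
  have "(if k = 0 then -1 else 1) * of_int m = herm (g (lattice_basis j i)) (lattice_basis j k)"
    using herm_lattice_basis_right[OF k(1)] k(2) by (simp add: m lattice_scale_def)
  also have "\<dots> = herm (lattice_basis j i) w"
    using isometry_herm[OF lattice_basis_in_Lam_j[OF i(1)] w(1)] w(2) by simp
  also have "\<dots> = (if i = 0 then -1 else 1) * (theta * cnj theta) * of_int n"
    using herm_lattice_basis_left[OF i(1)] i(2) by (simp add: n lattice_scale_def mult_ac)
  finally have "(if k = 0 then -1 else 1) * (of_int m :: complex) = (if i = 0 then -1 else 1) * (3 * of_int n)"
    by (simp add: cnj_theta theta_squared)
  then have "(of_int m :: complex) = of_int (3 * n) \<or> of_int m = (of_int (- (3 * n)) :: complex)"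
    by (cases "k = 0"; cases "i = 0"; simp; metis minus_minus)
  then have "m = 3 * n \<or> m = - (3 * n)"
    by (simp only: of_int_eq_iff)
  then show ?thesis by auto
qed

lemma E_extension_coeff_in_Eis:
  assumes i: "i < 5" and k: "k < 5"
  shows "g (lattice_basis j i) k / lattice_scale j i \<in> Eis"
proof -
  have column: "g (lattice_basis j i) \<in> Lam_j j"
    using isometry_in_Lam_j lattice_basis_in_Lam_j[OF i] .
  obtain m where m: "g (lattice_basis j i) k = of_int m * lattice_scale j k"
    using column k unfolding Lam_j_iff by auto
  consider "i < 5 - j" | "\<not> i < 5 - j" "\<not> k < 5 - j" | "\<not> i < 5 - j" "k < 5 - j"
    by blast
  then show ?thesis
  proof cases
    case 1
    then show ?thesis using column k by (simp add: lattice_scale_def Lam_j_def Lam_def)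
  next
    case 2
    then show ?thesis using m of_int_in_Eis theta_nonzero by (simp add: lattice_scale_def)
  next
    case 3
    then have "3 dvd m" using isometry_theta_column_dvd i k m by (simp add: lattice_scale_def)
    then obtain q where "m = 3 * q" ..
    then have "g (lattice_basis j i) k / lattice_scale j i = of_int (- q) * theta"
      using 3 m theta_nonzero
      by (simp add: lattice_scale_def field_simps) (simp add: mult.assoc[symmetric] theta_squared)
    then show ?thesis using Eis_mult[OF of_int_in_Eis theta_in_Eis] by metis
  qed
qed

lemma E_extension_in_Lam: "x \<in> Lam \<Longrightarrow> E_extension j g x \<in> Lam"
  using isometry_in_Lam_j[OF lattice_basis_in_Lam_j]
  by (auto simp: Lam_def Lam_j_iff E_extension_def
      intro!: Eis_sum Eis_mult[OF _ E_extension_coeff_in_Eis, simplified times_divide_eq_right])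

end

lemma lattice_isometry_j_inv_into:
  assumes iso: "lattice_isometry_j j g"
  shows "lattice_isometry_j j (inv_into (Lam_j j) g)"
proof -
  let ?h = "inv_into (Lam_j j) g"
  have bij: "bij_betw g (Lam_j j) (Lam_j j)" and inj: "inj_on g (Lam_j j)"
    and onto: "g ` Lam_j j = Lam_j j"
    using iso by (auto simp: lattice_isometry_j_def bij_betw_def)
  have h_in: "?h x \<in> Lam_j j" if "x \<in> Lam_j j" for x
    using inv_into_into[of x g "Lam_j j"] that onto by simp
  have g_h: "g (?h x) = x" if "x \<in> Lam_j j" for x
    using f_inv_into_f[of x g "Lam_j j"] that onto by simp
  have "?h (\<lambda>i. x i + y i) = (\<lambda>i. ?h x i + ?h y i)" if x: "x \<in> Lam_j j" and y: "y \<in> Lam_j j" for x y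
  proof -
    have "g (\<lambda>i. ?h x i + ?h y i) = (\<lambda>i. x i + y i)"
      using iso h_in[OF x] h_in[OF y] g_h[OF x] g_h[OF y] by (simp add: lattice_isometry_j_def)
    then show ?thesis using inv_into_f_f[OF inj Lam_j_add[OF h_in[OF x] h_in[OF y]]] by simp
  qed
  moreover have "herm (?h x) (?h y) = herm x y" if "x \<in> Lam_j j" "y \<in> Lam_j j" for x y
    using isometry_herm[OF iso h_in h_in] g_h that by simp
  ultimately show ?thesis
    unfolding lattice_isometry_j_def using bij_betw_inv_into[OF bij] by blast
qed

lemma E_extension_inverse:
  assumes g: "lattice_isometry_j j g" and h: "lattice_isometry_j j h"
    and h_g: "\<And>x. x \<in> Lam_j j \<Longrightarrow> h (g x) = x" and x: "x \<in> Lam"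
  shows "E_extension j h (E_extension j g x) = x"
proof -
  have "E_extension j h (E_extension j g x)
      = (\<lambda>k. \<Sum>i<5. x i / lattice_scale j i * E_extension j h (g (lattice_basis j i)) k)"
    unfolding E_extension_def[of j g] by (rule E_extension_sum)
  also have "\<dots> = (\<lambda>k. \<Sum>i<5. x i / lattice_scale j i * lattice_basis j i k)"
    using E_extension_extends[OF _ isometry_in_Lam_j[OF g]] h h_g lattice_basis_in_Lam_j
    by (simp add: lattice_isometry_j_def)
  also have "\<dots> = x"
    using x by (intro lattice_basis_expansion) (simp add: Lam_def)
  finally show ?thesis .
qed

theorem lemma5p2:
  fixes j :: nat and g :: "(nat \<Rightarrow> complex) \<Rightarrow> (nat \<Rightarrow> complex)"
  assumes "j \<le> 4"
    and "lattice_isometry_j j g"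
  shows "\<exists>G. E_isometry G \<and> (\<forall>x\<in>Lam_j j. G x = g x)"
proof -
  note g = assms(2)
  let ?h = "inv_into (Lam_j j) g"
  have h: "lattice_isometry_j j ?h" using lattice_isometry_j_inv_into[OF g] .
  have "bij_betw (E_extension j g) Lam Lam"
  proof (rule bij_betw_byWitness[where f' = "E_extension j ?h"])
    have "?h (g x) = x" "g (?h x) = x" if "x \<in> Lam_j j" for x
      using g that by (auto simp: lattice_isometry_j_def bij_betw_def f_inv_into_f)
    then show "\<forall>x\<in>Lam. E_extension j ?h (E_extension j g x) = x"
      and "\<forall>x\<in>Lam. E_extension j g (E_extension j ?h x) = x"
      using E_extension_inverse[OF g h] E_extension_inverse[OF h g] by auto
    show "E_extension j g ` Lam \<subseteq> Lam" "E_extension j ?h ` Lam \<subseteq> Lam"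
      using E_extension_in_Lam[OF g] E_extension_in_Lam[OF h] by auto
  qed
  moreover have "\<forall>x\<in>Lam_j j. E_extension j g x = g x"
    using E_extension_extends g by (simp add: lattice_isometry_j_def)
  ultimately show ?thesis
    using E_extension_add E_extension_mult herm_E_extension g
    unfolding E_isometry_def lattice_isometry_j_def by blast
qed

end
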